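(* Let $K$ be as in the context. Let $G_1,G_2$ be connected graphs with $n_1$ and $n_2$ vertices, where $G_1$ has vertex set $\{1,\dots,n_1\}$, $G_2$ has vertex set $\{n_1,\dots,n_1+n_2-1\}$ (so the vertex $n_1$ is their only common vertex), and let $G=G_1\cup G_2$ be the graph with vertex set $\{1,\dots,n_1+n_2-1\}$ and edge set the union of the edge sets. Suppose that one of $\Lambda^K_{G_1},\Lambda^K_{G_2}$ is universally $L^p$-improving and the other has a non-trivial estimate at the common vertex $n_1$. Then $\Lambda^K_G$ is $L^p$-improving: there exist exponents $s_1,\dots,s_{n_1+n_2-1}\in[1,\infty]$ with $\sum_i 1/s_i>1$ and $C$ such that $\Lambda^K_G(f_1,\dots,f_{n_1+n_2-1})\le C\prod_i\|f_i\|_{L^{s_i}(\mathbb R^d)}$ for all nonnegative measurable $f_i$.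
   Context: Let $K:\mathbb R^d\times\mathbb R^d\to[0,\infty)$ be a nonnegative locally integrable function. For a finite graph $H$ with vertex set $V\subset\mathbb N$ (usual order) and edge set $E$, and nonnegative measurable $f_v$, $v\in V$, define $\Lambda^K_H((f_v))=\int_{(\mathbb R^d)^V}\prod_{\{i,j\}\in E,\ i<j}K(x^i,x^j)\prod_v f_v(x^v)\,dx^v$. For each vertex $i\in V$ write $\Lambda^K_H((f_v))=\int T_i((f_v)_{v\ne i})(x^i)f_i(x^i)\,dx^i$, where $T_i$ is the multilinear operator obtained by integrating out all variables except $x^i$. (i) $\Lambda^K_H$ (with $|V|=m$) has a non-trivial estimate at vertex $i$ if there exist $p_v\in[1,\infty]$, $v\in V$, with $p_i<\infty$, $\sum_v1/p_v\ge1$, and $C$ such that $\Lambda^K_H((f_v))\le C\prod_v\|f_v\|_{L^{p_v}}$ for all nonnegative measurable $f_v$. (ii) An $(m-1)$-linear operator $U$ is universally $L^p$-improving if for every $r\in(1,\infty)$ there exist $p_1,\dots,p_{m-1}\in[1,\infty]$ with $\sum_j1/p_j>1/r$ and $C$ such that $\|U(g_1,\dots,g_{m-1})\|_{L^r(\mathbb R^d)}\le C\prod_j\|g_j\|_{L^{p_j}(\mathbb R^d)}$; the form $\Lambda^K_H$ is universally $L^p$-improving if every $T_i$, $i\in V$, is universally $L^p$-improving. $\Lambda^K_H$ is $L^p$-improving if there exist $p_v\in[1,\infty]$ with $\sum_v1/p_v>1$ and $C$ such that $\Lambda^K_H((f_v))\le C\prod_v\|f_v\|_{L^{p_v}}$.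 *)

theory Defs
  imports "HOL-Analysis.Analysis" "HOL-Probability.Probability"
begin

definition graph :: "nat set \<Rightarrow> nat set set \<Rightarrow> bool" where
  "graph V E \<longleftrightarrow> finite V \<and> (\<forall>e\<in>E. e \<subseteq> V \<and> card e = 2)"

definition connected_graph :: "nat set \<Rightarrow> nat set set \<Rightarrow> bool" where
  "connected_graph V E \<longleftrightarrow> graph V E \<and> V \<noteq> {} \<and>
     (\<forall>u\<in>V. \<forall>w\<in>V. (\<lambda>a b. {a, b} \<in> E)\<^sup>*\<^sup>* u w)"

definition epow :: "ennreal \<Rightarrow> real \<Rightarrow> ennreal" where
  "epow t q = (if t = \<top> then \<top> else ennreal (enn2real t powr q))"

definition Lpnorm :: "ennreal \<Rightarrow> ('a::euclidean_space \<Rightarrow> ennreal) \<Rightarrow> ennreal" where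
  "Lpnorm p f = (if p = \<top> then esssup lborel f
      else epow (\<integral>\<^sup>+ x. epow (f x) (enn2real p) \<partial>lborel) (1 / enn2real p))"

definition locally_integrable_kernel :: "('a::euclidean_space \<Rightarrow> 'a \<Rightarrow> real) \<Rightarrow> bool" where
  "locally_integrable_kernel K \<longleftrightarrow>
     (\<forall>S. compact S \<longrightarrow> set_integrable lborel S (\<lambda>z. K (fst z) (snd z)))"

definition kernel_prod :: "('a \<Rightarrow> 'a \<Rightarrow> real) \<Rightarrow> nat set set \<Rightarrow> (nat \<Rightarrow> 'a) \<Rightarrow> ennreal" where
  "kernel_prod K E x = (\<Prod>e\<in>E. ennreal (K (x (Min e)) (x (Max e))))"

definition Lambda :: "('a::euclidean_space \<Rightarrow> 'a \<Rightarrow> real) \<Rightarrow> nat set \<Rightarrow> nat set set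
    \<Rightarrow> (nat \<Rightarrow> 'a \<Rightarrow> ennreal) \<Rightarrow> ennreal" where
  "Lambda K V E f = (\<integral>\<^sup>+ x. kernel_prod K E x * (\<Prod>v\<in>V. f v (x v)) \<partial>(PiM V (\<lambda>_. lborel)))"

definition Top :: "('a::euclidean_space \<Rightarrow> 'a \<Rightarrow> real) \<Rightarrow> nat set \<Rightarrow> nat set set \<Rightarrow> nat
    \<Rightarrow> (nat \<Rightarrow> 'a \<Rightarrow> ennreal) \<Rightarrow> 'a \<Rightarrow> ennreal" where
  "Top K V E i g y = (\<integral>\<^sup>+ x. kernel_prod K E (x(i := y)) * (\<Prod>v\<in>V - {i}. g v (x v))
      \<partial>(PiM (V - {i}) (\<lambda>_. lborel)))"

definition admissible_fns :: "nat set \<Rightarrow> (nat \<Rightarrow> 'a::euclidean_space \<Rightarrow> ennreal) \<Rightarrow> bool" where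
  "admissible_fns W f \<longleftrightarrow> (\<forall>v\<in>W. f v \<in> borel_measurable lborel)"

definition nontrivial_estimate_at ::
    "('a::euclidean_space \<Rightarrow> 'a \<Rightarrow> real) \<Rightarrow> nat set \<Rightarrow> nat set set \<Rightarrow> nat \<Rightarrow> bool" where
  "nontrivial_estimate_at K V E i \<longleftrightarrow>
     (\<exists>p :: nat \<Rightarrow> ennreal. (\<forall>v\<in>V. 1 \<le> p v) \<and> p i < \<top> \<and> (\<Sum>v\<in>V. 1 / p v) \<ge> 1 \<and>
       (\<exists>C::real. \<forall>f. admissible_fns V f \<longrightarrow>
          Lambda K V E f \<le> ennreal C * (\<Prod>v\<in>V. Lpnorm (p v) (f v))))"

definition univ_Lp_improving_op ::
    "('a::euclidean_space \<Rightarrow> 'a \<Rightarrow> real) \<Rightarrow> nat set \<Rightarrow> nat set set \<Rightarrow> nat \<Rightarrow> bool" where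
  "univ_Lp_improving_op K V E i \<longleftrightarrow>
     (\<forall>r::real. 1 < r \<longrightarrow>
       (\<exists>p :: nat \<Rightarrow> ennreal. (\<forall>v\<in>V - {i}. 1 \<le> p v) \<and>
          (\<Sum>v\<in>V - {i}. 1 / p v) > 1 / ennreal r \<and>
          (\<exists>C::real. \<forall>g. admissible_fns (V - {i}) g \<longrightarrow>
             Lpnorm (ennreal r) (Top K V E i g) \<le> ennreal C * (\<Prod>v\<in>V - {i}. Lpnorm (p v) (g v)))))"

definition univ_Lp_improving ::
    "('a::euclidean_space \<Rightarrow> 'a \<Rightarrow> real) \<Rightarrow> nat set \<Rightarrow> nat set set \<Rightarrow> bool" where
  "univ_Lp_improving K V E \<longleftrightarrow> (\<forall>i\<in>V. univ_Lp_improving_op K V E i)"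

definition Lp_improving ::
    "('a::euclidean_space \<Rightarrow> 'a \<Rightarrow> real) \<Rightarrow> nat set \<Rightarrow> nat set set \<Rightarrow> bool" where
  "Lp_improving K V E \<longleftrightarrow>
     (\<exists>p :: nat \<Rightarrow> ennreal. (\<forall>v\<in>V. 1 \<le> p v) \<and> (\<Sum>v\<in>V. 1 / p v) > 1 \<and>
       (\<exists>C::real. \<forall>f. admissible_fns V f \<longrightarrow>
          Lambda K V E f \<le> ennreal C * (\<Prod>v\<in>V. Lpnorm (p v) (f v))))"

end

theory Submission
  imports Defs
begin

text \<open>Integrating out the vertices of \<open>G\<^sub>1\<close> other than the common vertex \<open>c\<close> turns
  \<open>\<Lambda>\<^sub>G(f)\<close> into \<open>\<Lambda>\<^sub>G\<^sub>2\<close> applied to the same functions, except that \<open>f\<^sub>c\<close> is replaced by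
  \<open>f\<^sub>c \<cdot> T\<^sub>c(f)\<close> with \<open>T\<^sub>c\<close> the operator of \<open>G\<^sub>1\<close> at \<open>c\<close>. The non-trivial estimate for
  \<open>G\<^sub>2\<close> controls this by \<open>\<parallel>f\<^sub>c T\<^sub>c(f)\<parallel>\<^sub>P\<close>, \<open>P = p\<^sub>c < \<infinity>\<close>, times the other norms.
  Hoelder's inequality with \<open>1/P = 1/(2P) + 1/(2P)\<close> and the universal improvement of
  \<open>T\<^sub>c\<close> at \<open>r = 2P\<close> then bound it by \<open>\<parallel>f\<^sub>c\<parallel>\<^sub>2\<^sub>P \<Prod> \<parallel>f\<^sub>v\<parallel>\<^sub>q\<^sub>v\<close> with \<open>\<Sum> 1/q\<^sub>v > 1/(2P)\<close>; this strict
  gain pushes the sum of reciprocal exponents above \<open>1\<close>.\<close>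

lemma epow_top [simp]: "epow \<top> q = \<top>"
  by (simp add: epow_def)

lemma epow_ennreal: "0 \<le> a \<Longrightarrow> epow (ennreal a) q = ennreal (a powr q)"
  by (simp add: epow_def)

lemma epow_eq_0_iff [simp]: "epow x q = 0 \<longleftrightarrow> x = 0"
  by (cases x) (auto simp: epow_def ennreal_eq_0_iff)

lemma epow_mono: "x \<le> y \<Longrightarrow> 0 \<le> q \<Longrightarrow> epow x q \<le> epow y q"
  by (cases x; cases y) (auto simp: epow_def powr_mono2 ennreal_leI top_unique)

lemma epow_mult: "0 < q \<Longrightarrow> epow (x * y) q = epow x q * epow y q"
  by (cases x; cases y)
     (auto simp: epow_def ennreal_mult_top ennreal_top_mult powr_mult ennreal_mult[symmetric])

lemma epow_epow: "0 \<le> q \<Longrightarrow> epow (epow x q) q' = epow x (q * q')"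
  by (cases x) (auto simp: epow_def powr_powr)

lemma borel_measurable_epow [measurable]:
  "f \<in> borel_measurable M \<Longrightarrow> (\<lambda>x. epow (f x) q) \<in> borel_measurable M"
  unfolding epow_def by measurable (auto simp: pred_eq_const1 pred_eq_const2)

lemma Youngs_inequality_scaled:
  fixes s t a b p q :: real
  assumes p: "p > 1" and q: "q > 1" and pq: "1/p + 1/q = 1"
    and s: "s \<ge> 0" and t: "t \<ge> 0" and a: "a > 0" and b: "b > 0"
  shows "s * t \<le> a powr (1/p) * b powr (1/q) * (s powr p / (p * a) + t powr q / (q * b))"
proof -
  define ca where "ca = a powr (1/p)"
  define cb where "cb = b powr (1/q)"
  have ca: "ca > 0" "ca powr p = a" using p a by (auto simp: ca_def powr_powr)
  have cb: "cb > 0" "cb powr q = b" using q b by (auto simp: cb_def powr_powr)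
  have "(s/ca) * (t/cb) \<le> (s/ca) powr p / p + (t/cb) powr q / q"
    using assms ca cb by (intro Youngs_inequality) auto
  also have "\<dots> = s powr p / (p * a) + t powr q / (q * b)"
    using ca cb s t by (simp add: powr_divide ac_simps)
  finally have "ca * cb * ((s/ca) * (t/cb)) \<le> ca * cb * (s powr p / (p * a) + t powr q / (q * b))"
    using ca cb by (intro mult_left_mono) auto
  then show ?thesis using ca cb by (simp add: ca_def cb_def)
qed

lemma Youngs_inequality_ennreal:
  fixes u v :: ennreal and a b p q :: real
  assumes p: "p > 1" and q: "q > 1" and pq: "1/p + 1/q = 1" and a: "a > 0" and b: "b > 0"
  defines "c \<equiv> a powr (1/p) * b powr (1/q)"
  shows "u * v \<le> ennreal (c / (p * a)) * epow u p + ennreal (c / (q * b)) * epow v q"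
proof (cases "u = \<top> \<or> v = \<top>")
  case True
  have "c / (p * a) > 0" "c / (q * b) > 0" using p q a b by (auto simp: c_def)
  with True show ?thesis
    by (cases "u = 0 \<or> v = 0") (auto simp: ennreal_mult_top)
next
  case False
  then obtain s t where st: "u = ennreal s" "v = ennreal t" "s \<ge> 0" "t \<ge> 0"
    by (metis enn2real_nonneg ennreal_enn2real_if)
  have "s * t \<le> c * (s powr p / (p * a) + t powr q / (q * b))"
    unfolding c_def using Youngs_inequality_scaled[OF p q pq st(3,4) a b] .
  also have "\<dots> = c / (p * a) * s powr p + c / (q * b) * t powr q"
    by (simp add: field_simps)
  finally show ?thesis using st p q a b
    by (simp add: c_def epow_ennreal ennreal_leI flip: ennreal_mult ennreal_plus)
qed

lemma nn_integral_mult_eq_0_if_epow: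
  assumes u: "u \<in> borel_measurable M" and int0: "(\<integral>\<^sup>+x. epow (u x) p \<partial>M) = 0"
  shows "(\<integral>\<^sup>+x. u x * v x \<partial>M) = 0"
proof -
  have "AE x in M. epow (u x) p = 0"
    using int0 u by (subst (asm) nn_integral_0_iff_AE) auto
  then have "AE x in M. u x * v x = 0"
    by eventually_elim simp
  then have "(\<integral>\<^sup>+x. u x * v x \<partial>M) = (\<integral>\<^sup>+x. 0 \<partial>M)"
    by (rule nn_integral_cong_AE)
  then show ?thesis
    by simp
qed

lemma nn_integral_Holder:
  fixes u v :: "'b \<Rightarrow> ennreal"
  assumes u: "u \<in> borel_measurable M" and v: "v \<in> borel_measurable M"
    and p: "p > 1" and q: "q > 1" and pq: "1/p + 1/q = 1"
  shows "(\<integral>\<^sup>+x. u x * v x \<partial>M)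
    \<le> epow (\<integral>\<^sup>+x. epow (u x) p \<partial>M) (1/p) * epow (\<integral>\<^sup>+x. epow (v x) q \<partial>M) (1/q)"
    (is "_ \<le> epow ?A _ * epow ?B _")
proof (cases "?A = 0 \<or> ?B = 0")
  case True
  then show ?thesis
    using nn_integral_mult_eq_0_if_epow[OF u, where p = p and v = v]
      nn_integral_mult_eq_0_if_epow[OF v, where p = q and v = u]
    by (auto simp: mult.commute)
next
  case nonzero: False
  show ?thesis
  proof (cases "?A = \<top> \<or> ?B = \<top>")
    case True
    with nonzero show ?thesis
      by (auto simp: ennreal_mult_eq_top_iff)
  next
    case False
    with nonzero obtain a b where ab: "?A = ennreal a" "?B = ennreal b" "a > 0" "b > 0"
      by (metis enn2real_positive_iff ennreal_enn2real less_top not_gr_zero)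
    define c where "c = a powr (1/p) * b powr (1/q)"
    have "(\<integral>\<^sup>+x. u x * v x \<partial>M)
        \<le> (\<integral>\<^sup>+x. ennreal (c / (p * a)) * epow (u x) p + ennreal (c / (q * b)) * epow (v x) q \<partial>M)"
      unfolding c_def by (intro nn_integral_mono Youngs_inequality_ennreal p q pq ab)
    also have "\<dots> = ennreal (c / (p * a)) * ennreal a + ennreal (c / (q * b)) * ennreal b"
      using u v ab by (simp add: nn_integral_add nn_integral_cmult)
    also have "\<dots> = ennreal (c * (1/p + 1/q))"
      using ab p q by (simp add: c_def field_simps flip: ennreal_mult ennreal_plus)
    also have "\<dots> = epow ?A (1/p) * epow ?B (1/q)"
      using ab pq by (simp add: c_def epow_ennreal ennreal_mult)
    finally show ?thesis .
  qed
qed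

lemma Lpnorm_ennreal:
  "0 \<le> p \<Longrightarrow> Lpnorm (ennreal p) f = epow (\<integral>\<^sup>+ x. epow (f x) p \<partial>lborel) (1 / p)"
  by (simp add: Lpnorm_def)

lemma Lpnorm_mult_le:
  fixes f g :: "'a::euclidean_space \<Rightarrow> ennreal" and p a b :: real
  assumes f: "f \<in> borel_measurable lborel" and g: "g \<in> borel_measurable lborel"
    and p: "p > 0" and a: "a > p" and b: "b > p" and pab: "1/p = 1/a + 1/b"
  shows "Lpnorm (ennreal p) (\<lambda>x. f x * g x) \<le> Lpnorm (ennreal a) f * Lpnorm (ennreal b) g"
proof -
  define A where "A = (\<integral>\<^sup>+x. epow (f x) a \<partial>lborel)"
  define B where "B = (\<integral>\<^sup>+x. epow (g x) b \<partial>lborel)"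
  have "(\<integral>\<^sup>+ x. epow (f x * g x) p \<partial>lborel) = (\<integral>\<^sup>+ x. epow (f x) p * epow (g x) p \<partial>lborel)"
    using p by (simp add: epow_mult)
  also have "\<dots> \<le> epow (\<integral>\<^sup>+x. epow (epow (f x) p) (a/p) \<partial>lborel) (1/(a/p)) *
      epow (\<integral>\<^sup>+x. epow (epow (g x) p) (b/p) \<partial>lborel) (1/(b/p))"
    using f g p a b pab by (intro nn_integral_Holder) (auto simp: field_simps)
  also have "\<dots> = epow A (p/a) * epow B (p/b)"
    using p by (simp add: A_def B_def epow_epow)
  finally have "epow (\<integral>\<^sup>+ x. epow (f x * g x) p \<partial>lborel) (1/p) \<le> epow (epow A (p/a) * epow B (p/b)) (1/p)"
    using p by (intro epow_mono) auto
  also have "\<dots> = epow A (1/a) * epow B (1/b)"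
    using p a b by (simp add: epow_mult epow_epow)
  finally show ?thesis
    using p a b by (simp add: Lpnorm_ennreal A_def B_def)
qed

lemma borel_measurable_locally_integrable_kernel:
  fixes K :: "'a::euclidean_space \<Rightarrow> 'a \<Rightarrow> real"
  assumes "locally_integrable_kernel K"
  shows "(\<lambda>z. K (fst z) (snd z)) \<in> borel_measurable (borel \<Otimes>\<^sub>M borel)"
proof -
  let ?K = "\<lambda>z::'a \<times> 'a. K (fst z) (snd z)"
  have "(\<lambda>z. indicator (cball 0 (real i)) z *\<^sub>R ?K z) \<in> borel_measurable borel" for i
  proof -
    have "set_integrable lborel (cball 0 (real i)) ?K"
      using assms unfolding locally_integrable_kernel_def by auto
    then have "(\<lambda>z. indicator (cball 0 (real i)) z *\<^sub>R ?K z) \<in> borel_measurable lborel"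
      unfolding set_integrable_def by (rule borel_measurable_integrable)
    then show ?thesis
      by simp
  qed
  moreover have "(\<lambda>i. indicator (cball 0 (real i)) z *\<^sub>R ?K z) \<longlonglongrightarrow> ?K z" for z
  proof (rule tendsto_eventually, unfold eventually_sequentially, intro exI allI impI)
    fix i assume "nat \<lceil>norm z\<rceil> \<le> i"
    then show "indicator (cball 0 (real i)) z *\<^sub>R ?K z = ?K z"
      by (simp add: indicator_def dist_norm)
  qed
  ultimately have "?K \<in> borel_measurable borel"
    by (rule borel_measurable_LIMSEQ_real[rotated])
  then show ?thesis
    by (simp add: borel_prod)
qed

lemma graph_edge: "graph V E \<Longrightarrow> e \<in> E \<Longrightarrow> e \<subseteq> V \<and> card e = 2"
  unfolding graph_def by auto

lemma graph_finite_edges: "graph V E \<Longrightarrow> finite E"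
proof -
  assume "graph V E"
  then have "E \<subseteq> Pow V" "finite V"
    unfolding graph_def by auto
  then show "finite E"
    by (simp add: finite_subset)
qed

lemma graph_Un: "graph V1 E1 \<Longrightarrow> graph V2 E2 \<Longrightarrow> graph (V1 \<union> V2) (E1 \<union> E2)"
  unfolding graph_def by blast

lemma graph_edges_disjoint:
  assumes "graph V1 E1" "graph V2 E2" "V1 \<inter> V2 = {c}"
  shows "E1 \<inter> E2 = {}"
proof (rule ccontr)
  assume "E1 \<inter> E2 \<noteq> {}"
  then obtain e where "e \<in> E1" "e \<in> E2" "card e = 2"
    using assms(1) graph_edge by blast
  moreover from this have "e \<subseteq> {c}"
    using assms graph_edge by blast
  ultimately show False
    using card_mono[of "{c}" e] by simp
qed

lemma edge_Min_Max:
  assumes "card e = 2"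
  shows "Min e \<in> e \<and> Max e \<in> e"
proof -
  have "finite e" "e \<noteq> {}"
    using assms by (auto intro: card_ge_0_finite)
  then show ?thesis
    by simp
qed

lemma kernel_prod_cong:
  assumes "graph V E" and "\<And>i. i \<in> V \<Longrightarrow> x i = y i"
  shows "kernel_prod K E x = kernel_prod K E y"
  unfolding kernel_prod_def
proof (rule prod.cong[OF refl])
  fix e assume "e \<in> E"
  then have "Min e \<in> V" "Max e \<in> V"
    using assms(1) graph_edge edge_Min_Max by blast+
  then show "ennreal (K (x (Min e)) (x (Max e))) = ennreal (K (y (Min e)) (y (Max e)))"
    using assms(2) by simp
qed

lemma borel_measurable_kernel_prod:
  fixes K :: "'a::euclidean_space \<Rightarrow> 'a \<Rightarrow> real"
  assumes K: "(\<lambda>z. K (fst z) (snd z)) \<in> borel_measurable (borel \<Otimes>\<^sub>M borel)"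
    and G: "graph V E" and h: "\<And>i. i \<in> V \<Longrightarrow> (\<lambda>\<omega>. h \<omega> i) \<in> borel_measurable M"
  shows "(\<lambda>\<omega>. kernel_prod K E (h \<omega>)) \<in> borel_measurable M"
  unfolding kernel_prod_def
proof (rule borel_measurable_prod_ennreal)
  fix e assume "e \<in> E"
  then have "Min e \<in> V" "Max e \<in> V"
    using G graph_edge edge_Min_Max by blast+
  then have "(\<lambda>\<omega>. (h \<omega> (Min e), h \<omega> (Max e))) \<in> measurable M (borel \<Otimes>\<^sub>M borel)"
    using h by (intro measurable_Pair) auto
  from measurable_compose[OF measurable_compose[OF this K] measurable_ennreal]
  show "(\<lambda>\<omega>. ennreal (K (h \<omega> (Min e)) (h \<omega> (Max e)))) \<in> borel_measurable M"
    by simp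
qed

lemma measurable_component_lborel:
  "i \<in> I \<Longrightarrow> (\<lambda>x. x i) \<in> borel_measurable (PiM I (\<lambda>_. lborel::'a::euclidean_space measure))"
  using measurable_component_singleton[of i I "\<lambda>_. lborel::'a measure"] by simp

lemma borel_measurable_Lambda_integrand:
  fixes K :: "'a::euclidean_space \<Rightarrow> 'a \<Rightarrow> real"
  assumes K: "(\<lambda>z. K (fst z) (snd z)) \<in> borel_measurable (borel \<Otimes>\<^sub>M borel)"
    and G: "graph V E" and f: "admissible_fns V f"
  shows "(\<lambda>x. kernel_prod K E x * (\<Prod>v\<in>V. f v (x v))) \<in> borel_measurable (PiM V (\<lambda>_. lborel))"
proof (rule borel_measurable_times_ennreal)
  show "(\<lambda>x. kernel_prod K E x) \<in> borel_measurable (PiM V (\<lambda>_. lborel))"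
    using K G measurable_component_lborel by (rule borel_measurable_kernel_prod)
  show "(\<lambda>x. \<Prod>v\<in>V. f v (x v)) \<in> borel_measurable (PiM V (\<lambda>_. lborel))"
    using f measurable_compose[OF measurable_component_lborel]
    unfolding admissible_fns_def by (intro borel_measurable_prod_ennreal) auto
qed

lemma borel_measurable_Top_integrand:
  fixes K :: "'a::euclidean_space \<Rightarrow> 'a \<Rightarrow> real"
  assumes K: "(\<lambda>z. K (fst z) (snd z)) \<in> borel_measurable (borel \<Otimes>\<^sub>M borel)"
    and G: "graph V E" and f: "admissible_fns (V - {c}) f"
  shows "(\<lambda>(y, x). kernel_prod K E (x(c := y)) * (\<Prod>v\<in>V - {c}. f v (x v)))
    \<in> borel_measurable (borel \<Otimes>\<^sub>M PiM (V - {c}) (\<lambda>_. lborel))"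
  unfolding case_prod_beta
proof (rule borel_measurable_times_ennreal)
  let ?N = "borel \<Otimes>\<^sub>M PiM (V - {c}) (\<lambda>_. lborel::'a measure)"
  have "(\<lambda>\<omega>. ((snd \<omega>)(c := fst \<omega>)) i) \<in> borel_measurable ?N" if "i \<in> V" for i
    using that by (cases "i = c")
       (auto intro: measurable_compose[OF measurable_snd measurable_component_lborel])
  with K G show "(\<lambda>\<omega>. kernel_prod K E ((snd \<omega>)(c := fst \<omega>))) \<in> borel_measurable ?N"
    by (rule borel_measurable_kernel_prod)
  show "(\<lambda>\<omega>. \<Prod>v\<in>V - {c}. f v (snd \<omega> v)) \<in> borel_measurable ?N"
  proof (rule borel_measurable_prod_ennreal)
    fix v assume v: "v \<in> V - {c}"
    then have "f v \<in> borel_measurable borel"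
      using f unfolding admissible_fns_def by simp
    then show "(\<lambda>\<omega>. f v (snd \<omega> v)) \<in> borel_measurable ?N"
      by (rule measurable_compose[OF measurable_compose[OF measurable_snd measurable_component_lborel[OF v]]])
  qed
qed

lemma borel_measurable_Top:
  fixes K :: "'a::euclidean_space \<Rightarrow> 'a \<Rightarrow> real"
  assumes K: "(\<lambda>z. K (fst z) (snd z)) \<in> borel_measurable (borel \<Otimes>\<^sub>M borel)"
    and G: "graph V E" and f: "admissible_fns (V - {c}) f"
  shows "Top K V E c f \<in> borel_measurable borel"
proof -
  interpret product_sigma_finite "\<lambda>_::nat. lborel::'a measure"
    by standard
  interpret sigma_finite_measure "PiM (V - {c}) (\<lambda>_. lborel::'a measure)"
    using G unfolding graph_def by (intro sigma_finite) auto
  show ?thesis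
    unfolding Top_def by (rule borel_measurable_nn_integral[OF borel_measurable_Top_integrand[OF K G f]])
qed

lemma prod_Un_common_point:
  fixes h :: "'i \<Rightarrow> 'b::comm_monoid_mult"
  assumes "finite V1" "finite V2" "V1 \<inter> V2 = {c}"
    and "\<And>v. v \<in> V1 - {c} \<Longrightarrow> h v = h1 v" "\<And>v. v \<in> V2 - {c} \<Longrightarrow> h v = h2 v"
  shows "prod h (V1 \<union> V2) = h c * prod h1 (V1 - {c}) * prod h2 (V2 - {c})"
proof -
  have "V1 \<union> V2 = V1 \<union> (V2 - {c})" "V1 \<inter> (V2 - {c}) = {}" "c \<in> V1"
    using assms(3) by auto
  then have "prod h (V1 \<union> V2) = h c * prod h (V1 - {c}) * prod h (V2 - {c})"
    using assms(1,2) by (simp add: prod.union_disjoint prod.remove)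
  also have "\<dots> = h c * prod h1 (V1 - {c}) * prod h2 (V2 - {c})"
    using assms(4,5) prod.cong[of "V1 - {c}" _ h h1] prod.cong[of "V2 - {c}" _ h h2] by simp
  finally show ?thesis .
qed

lemma sum_Un_common_point:
  fixes h :: "'i \<Rightarrow> 'b::comm_monoid_add"
  assumes "finite V1" "finite V2" "V1 \<inter> V2 = {c}"
    and "\<And>v. v \<in> V1 - {c} \<Longrightarrow> h v = h1 v" "\<And>v. v \<in> V2 - {c} \<Longrightarrow> h v = h2 v"
  shows "sum h (V1 \<union> V2) = h c + sum h1 (V1 - {c}) + sum h2 (V2 - {c})"
proof -
  have "V1 \<union> V2 = V1 \<union> (V2 - {c})" "V1 \<inter> (V2 - {c}) = {}" "c \<in> V1"
    using assms(3) by auto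
  then have "sum h (V1 \<union> V2) = h c + sum h (V1 - {c}) + sum h (V2 - {c})"
    using assms(1,2) by (simp add: sum.union_disjoint sum.remove)
  also have "\<dots> = h c + sum h1 (V1 - {c}) + sum h2 (V2 - {c})"
    using assms(4,5) sum.cong[of "V1 - {c}" _ h h1] sum.cong[of "V2 - {c}" _ h h2] by simp
  finally show ?thesis .
qed

lemma Lambda_integrand_merge:
  fixes x y :: "nat \<Rightarrow> 'a"
  assumes G1: "graph V1 E1" and G2: "graph V2 E2" and V12: "V1 \<inter> V2 = {c}"
  defines "m \<equiv> merge V2 (V1 - {c}) (x, y)"
  shows "kernel_prod K (E1 \<union> E2) m * (\<Prod>v\<in>V1 \<union> V2. f v (m v))
    = (kernel_prod K E2 x * (\<Prod>v\<in>V2. f v (x v)))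
      * (kernel_prod K E1 (y(c := x c)) * (\<Prod>v\<in>V1 - {c}. f v (y v)))"
proof -
  have fin: "finite V1" "finite V2" "finite E1" "finite E2"
    using G1 G2 graph_finite_edges unfolding graph_def by auto
  have "kernel_prod K (E1 \<union> E2) m = kernel_prod K E1 m * kernel_prod K E2 m"
    unfolding kernel_prod_def
    using fin graph_edges_disjoint[OF G1 G2 V12] by (simp add: prod.union_disjoint)
  also have "kernel_prod K E1 m = kernel_prod K E1 (y(c := x c))"
    using G1 by (rule kernel_prod_cong) (use V12 in \<open>auto simp: m_def merge_def\<close>)
  also have "kernel_prod K E2 m = kernel_prod K E2 x"
    using G2 by (rule kernel_prod_cong) (simp add: m_def merge_def)
  finally have kernel: "kernel_prod K (E1 \<union> E2) m = kernel_prod K E1 (y(c := x c)) * kernel_prod K E2 x" .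
  have "V1 \<union> V2 = V2 \<union> (V1 - {c})" "V2 \<inter> (V1 - {c}) = {}"
    using V12 by auto
  then have "(\<Prod>v\<in>V1 \<union> V2. f v (m v)) = (\<Prod>v\<in>V2. f v (m v)) * (\<Prod>v\<in>V1 - {c}. f v (m v))"
    using fin by (simp add: prod.union_disjoint)
  also have "(\<Prod>v\<in>V2. f v (m v)) = (\<Prod>v\<in>V2. f v (x v))"
    by (intro prod.cong) (auto simp: m_def merge_def)
  also have "(\<Prod>v\<in>V1 - {c}. f v (m v)) = (\<Prod>v\<in>V1 - {c}. f v (y v))"
    using V12 by (intro prod.cong) (auto simp: m_def merge_def)
  finally show ?thesis
    unfolding kernel by (simp add: ac_simps)
qed

lemma prod_fun_upd_mult:
  fixes f :: "'i \<Rightarrow> 'b \<Rightarrow> 'c::comm_monoid_mult"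
  assumes "finite V" "c \<in> V"
  shows "(\<Prod>v\<in>V. (f(c := \<lambda>y. f c y * t y)) v (x v)) = (\<Prod>v\<in>V. f v (x v)) * t (x c)"
proof -
  have "(\<Prod>v\<in>V - {c}. (f(c := \<lambda>y. f c y * t y)) v (x v)) = (\<Prod>v\<in>V - {c}. f v (x v))"
    by (rule prod.cong) auto
  then show ?thesis
    using assms by (simp add: prod.remove[of V c] ac_simps)
qed

lemma Lambda_glue:
  fixes K :: "'a::euclidean_space \<Rightarrow> 'a \<Rightarrow> real" and f :: "nat \<Rightarrow> 'a \<Rightarrow> ennreal"
  assumes K: "(\<lambda>z. K (fst z) (snd z)) \<in> borel_measurable (borel \<Otimes>\<^sub>M borel)"
    and G1: "graph V1 E1" and G2: "graph V2 E2" and V12: "V1 \<inter> V2 = {c}"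
    and f: "admissible_fns (V1 \<union> V2) f"
  shows "Lambda K (V1 \<union> V2) (E1 \<union> E2) f
    = Lambda K V2 E2 (f(c := \<lambda>y. f c y * Top K V1 E1 c f y))"
proof -
  interpret product_sigma_finite "\<lambda>_::nat. lborel::'a measure"
    by standard
  let ?J = "V1 - {c}" and ?T = "Top K V1 E1 c f"
  define F where "F x = kernel_prod K (E1 \<union> E2) x * (\<Prod>v\<in>V1 \<union> V2. f v (x v))" for x
  have fin: "finite V2" "finite ?J" and c: "c \<in> V2"
    using G1 G2 V12 unfolding graph_def by auto
  have VJ: "V1 \<union> V2 = V2 \<union> ?J" "V2 \<inter> ?J = {}"
    using V12 by auto
  have F: "F \<in> borel_measurable (PiM (V2 \<union> ?J) (\<lambda>_. lborel))"
    using borel_measurable_Lambda_integrand[OF K graph_Un[OF G1 G2] f]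
    unfolding F_def VJ(1) .
  have inner: "(\<integral>\<^sup>+ y. F (merge V2 ?J (x, y)) \<partial>PiM ?J (\<lambda>_. lborel))
      = kernel_prod K E2 x * (\<Prod>v\<in>V2. f v (x v)) * ?T (x c)" for x
  proof -
    have "(\<lambda>y. kernel_prod K E1 (y(c := x c)) * (\<Prod>v\<in>?J. f v (y v)))
        \<in> borel_measurable (PiM ?J (\<lambda>_. lborel))"
      using f by (intro measurable_Pair2[OF borel_measurable_Top_integrand[OF K G1], simplified])
        (auto simp: admissible_fns_def)
    then show ?thesis
      unfolding F_def Lambda_integrand_merge[OF G1 G2 V12]
      by (simp add: nn_integral_cmult Top_def)
  qed
  have "Lambda K (V1 \<union> V2) (E1 \<union> E2) f = integral\<^sup>N (PiM (V2 \<union> ?J) (\<lambda>_. lborel)) F"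
    unfolding Lambda_def F_def VJ(1) ..
  also have "\<dots> = (\<integral>\<^sup>+ x. (\<integral>\<^sup>+ y. F (merge V2 ?J (x, y)) \<partial>PiM ?J (\<lambda>_. lborel)) \<partial>PiM V2 (\<lambda>_. lborel))"
    using VJ(2) fin F by (rule product_nn_integral_fold)
  also have "\<dots> = Lambda K V2 E2 (f(c := \<lambda>y. f c y * ?T y))"
    unfolding inner Lambda_def prod_fun_upd_mult[OF fin(1) c] by (simp add: ac_simps)
  finally show ?thesis .
qed

lemma Lambda_glue_le:
  fixes K :: "'a::euclidean_space \<Rightarrow> 'a \<Rightarrow> real" and f :: "nat \<Rightarrow> 'a \<Rightarrow> ennreal"
    and p q :: "nat \<Rightarrow> ennreal" and P C1 C2 :: real
  assumes K: "(\<lambda>z. K (fst z) (snd z)) \<in> borel_measurable (borel \<Otimes>\<^sub>M borel)"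
    and G1: "graph V1 E1" and G2: "graph V2 E2" and V12: "V1 \<inter> V2 = {c}"
    and P: "p c = ennreal P" "P \<ge> 1"
    and T_bound: "\<And>g. admissible_fns (V1 - {c}) g \<Longrightarrow>
      Lpnorm (ennreal (2 * P)) (Top K V1 E1 c g) \<le> ennreal C1 * (\<Prod>v\<in>V1 - {c}. Lpnorm (q v) (g v))"
    and Lambda2_bound: "\<And>g. admissible_fns V2 g \<Longrightarrow>
      Lambda K V2 E2 g \<le> ennreal C2 * (\<Prod>v\<in>V2. Lpnorm (p v) (g v))"
    and f: "admissible_fns (V1 \<union> V2) f"
  shows "Lambda K (V1 \<union> V2) (E1 \<union> E2) f \<le> ennreal C2 * ennreal C1 *
    (Lpnorm (ennreal (2 * P)) (f c) * (\<Prod>v\<in>V1 - {c}. Lpnorm (q v) (f v))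
      * (\<Prod>v\<in>V2 - {c}. Lpnorm (p v) (f v)))"
proof -
  let ?T = "Top K V1 E1 c f"
  let ?g = "f(c := \<lambda>y. f c y * ?T y)"
  have c: "c \<in> V1" "c \<in> V2" and fin: "finite V2"
    using V12 G2 unfolding graph_def by auto
  have f1: "admissible_fns (V1 - {c}) f" and fc: "f c \<in> borel_measurable borel"
    using f c unfolding admissible_fns_def by auto
  have T: "?T \<in> borel_measurable borel"
    using K G1 f1 by (rule borel_measurable_Top)
  have g: "admissible_fns V2 ?g"
    using f fc T unfolding admissible_fns_def by auto
  have "Lpnorm (p c) (?g c) \<le> Lpnorm (ennreal (2 * P)) (f c) * Lpnorm (ennreal (2 * P)) ?T"
    using fc T P by (simp add: Lpnorm_mult_le)
  also have "\<dots> \<le> Lpnorm (ennreal (2 * P)) (f c) * (ennreal C1 * (\<Prod>v\<in>V1 - {c}. Lpnorm (q v) (f v)))"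
    using T_bound[OF f1] by (rule mult_left_mono) simp
  finally have gc: "Lpnorm (p c) (?g c) \<le> \<dots>" .
  have "(\<Prod>v\<in>V2 - {c}. Lpnorm (p v) (?g v)) = (\<Prod>v\<in>V2 - {c}. Lpnorm (p v) (f v))"
    by (rule prod.cong) auto
  then have "(\<Prod>v\<in>V2. Lpnorm (p v) (?g v)) = Lpnorm (p c) (?g c) * (\<Prod>v\<in>V2 - {c}. Lpnorm (p v) (f v))"
    using fin c by (simp add: prod.remove)
  then have "Lambda K (V1 \<union> V2) (E1 \<union> E2) f
      \<le> ennreal C2 * (Lpnorm (p c) (?g c) * (\<Prod>v\<in>V2 - {c}. Lpnorm (p v) (f v)))"
    using Lambda_glue[OF K G1 G2 V12 f] Lambda2_bound[OF g] by simp
  also have "\<dots> \<le> ennreal C2 * (Lpnorm (ennreal (2 * P)) (f c) *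
      (ennreal C1 * (\<Prod>v\<in>V1 - {c}. Lpnorm (q v) (f v))) * (\<Prod>v\<in>V2 - {c}. Lpnorm (p v) (f v)))"
    using gc by (intro mult_left_mono mult_right_mono) auto
  finally show ?thesis
    by (simp add: ac_simps)
qed

lemma glued_exponents_sum_gt_1:
  fixes p :: "nat \<Rightarrow> ennreal" and B :: ennreal and P :: real
  assumes V: "finite V" "c \<in> V" and p: "\<forall>v\<in>V. 1 \<le> p v" "1 \<le> (\<Sum>v\<in>V. 1 / p v)"
    and P: "p c = ennreal P" "P > 0" and B: "1 / ennreal (2 * P) < B"
  shows "1 < 1 / ennreal (2 * P) + B + (\<Sum>v\<in>V - {c}. 1 / p v)"
proof -
  let ?A = "\<Sum>v\<in>V - {c}. 1 / p v"
  have inv: "1 / ennreal x = ennreal (1 / x)" if "x > 0" for x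
    using divide_ennreal[of 1 x] that by simp
  have "1 / p v \<noteq> \<top>" if "v \<in> V" for v
    using p(1) that by (auto simp: ennreal_divide_eq_top_iff)
  then have A: "?A \<noteq> \<top>"
    using V by simp
  have "1 \<le> 1 / ennreal P + ?A"
    using p(2) V P(1) by (simp add: sum.remove)
  also have "1 / ennreal P = 1 / ennreal (2 * P) + 1 / ennreal (2 * P)"
    using P(2) by (simp add: inv flip: ennreal_plus)
  also have "\<dots> + ?A = (1 / ennreal (2 * P) + ?A) + 1 / ennreal (2 * P)"
    by (simp add: ac_simps)
  also have "\<dots> < (1 / ennreal (2 * P) + ?A) + B"
    using P(2) A B by (simp add: ennreal_add_left_cancel_less inv)
  finally show ?thesis
    by (simp add: ac_simps)
qed

lemma Lp_improving_glue:
  fixes K :: "'a::euclidean_space \<Rightarrow> 'a \<Rightarrow> real"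
  assumes K: "(\<lambda>z. K (fst z) (snd z)) \<in> borel_measurable (borel \<Otimes>\<^sub>M borel)"
    and G1: "graph V1 E1" and G2: "graph V2 E2" and V12: "V1 \<inter> V2 = {c}"
    and univ: "univ_Lp_improving_op K V1 E1 c" and nontriv: "nontrivial_estimate_at K V2 E2 c"
  shows "Lp_improving K (V1 \<union> V2) (E1 \<union> E2)"
proof -
  obtain p :: "nat \<Rightarrow> ennreal" and C2 :: real where
    p: "\<forall>v\<in>V2. 1 \<le> p v" "p c < \<top>" "1 \<le> (\<Sum>v\<in>V2. 1 / p v)" and
    Lambda2_bound: "\<And>g. admissible_fns V2 g \<Longrightarrow>
      Lambda K V2 E2 g \<le> ennreal C2 * (\<Prod>v\<in>V2. Lpnorm (p v) (g v))"
    using nontriv unfolding nontrivial_estimate_at_def by blast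
  have c: "c \<in> V1" "c \<in> V2" and fin: "finite V1" "finite V2"
    using V12 G1 G2 unfolding graph_def by auto
  define P where "P = enn2real (p c)"
  have P_eq: "p c = ennreal P"
    using p(2) by (simp add: P_def less_top)
  have P_ge: "P \<ge> 1"
    using p(1) c P_eq ennreal_ge_1 by metis
  \<comment> \<open>The Hoelder splitting \<open>1/P = 1/(2P) + 1/(2P)\<close> puts \<open>f\<^sub>c\<close> and \<open>T\<^sub>c\<close> into \<open>L\<^sup>2\<^sup>P\<close>.\<close>
  obtain q :: "nat \<Rightarrow> ennreal" and C1 :: real where
    q: "\<forall>v\<in>V1 - {c}. 1 \<le> q v" "1 / ennreal (2 * P) < (\<Sum>v\<in>V1 - {c}. 1 / q v)" and
    T_bound: "\<And>g. admissible_fns (V1 - {c}) g \<Longrightarrow>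
      Lpnorm (ennreal (2 * P)) (Top K V1 E1 c g) \<le> ennreal C1 * (\<Prod>v\<in>V1 - {c}. Lpnorm (q v) (g v))"
    using univ[unfolded univ_Lp_improving_op_def, rule_format, of "2 * P"] P_ge by auto
  define s where "s v = (if v \<in> V2 - {c} then p v else if v = c then ennreal (2 * P) else q v)" for v
  have s_V1: "\<And>v. v \<in> V1 - {c} \<Longrightarrow> s v = q v" and s_V2: "\<And>v. v \<in> V2 - {c} \<Longrightarrow> s v = p v"
    using V12 by (auto simp: s_def)
  have "1 < 1 / ennreal (2 * P) + (\<Sum>v\<in>V1 - {c}. 1 / q v) + (\<Sum>v\<in>V2 - {c}. 1 / p v)"
    using fin(2) c(2) p(1,3) P_eq P_ge q(2) by (intro glued_exponents_sum_gt_1) auto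
  also have "\<dots> = (\<Sum>v\<in>V1 \<union> V2. 1 / s v)"
    using fin V12 s_V1 s_V2 by (subst sum_Un_common_point) (auto simp: s_def)
  finally have s_sum: "1 < (\<Sum>v\<in>V1 \<union> V2. 1 / s v)" .
  have s_ge: "\<forall>v\<in>V1 \<union> V2. 1 \<le> s v"
    using p(1) q(1) P_ge by (auto simp: s_def)
  have "Lambda K (V1 \<union> V2) (E1 \<union> E2) f
      \<le> ennreal (max C2 0 * max C1 0) * (\<Prod>v\<in>V1 \<union> V2. Lpnorm (s v) (f v))"
    if f: "admissible_fns (V1 \<union> V2) f" for f
  proof -
    have "(\<Prod>v\<in>V1 \<union> V2. Lpnorm (s v) (f v)) = Lpnorm (ennreal (2 * P)) (f c)
        * (\<Prod>v\<in>V1 - {c}. Lpnorm (q v) (f v)) * (\<Prod>v\<in>V2 - {c}. Lpnorm (p v) (f v))"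
      using fin V12 s_V1 s_V2 by (subst prod_Un_common_point) (auto simp: s_def)
    then show ?thesis
      using Lambda_glue_le[OF K G1 G2 V12 P_eq P_ge T_bound Lambda2_bound f]
      by (simp add: ennreal_mult ennreal_max_0 max.commute)
  qed
  with s_sum s_ge show ?thesis
    unfolding Lp_improving_def by blast
qed

theorem theorem1p3:
  fixes K :: "'a::euclidean_space \<Rightarrow> 'a \<Rightarrow> real"
    and n1 n2 :: nat and E1 E2 :: "nat set set"
  assumes K_nonneg: "\<And>x y. K x y \<ge> 0"
    and K_loc: "locally_integrable_kernel K"
    and n1: "n1 \<ge> 1" and n2: "n2 \<ge> 1"
    and G1: "connected_graph {1..n1} E1"
    and G2: "connected_graph {n1..n1 + n2 - 1} E2"
    and hyp: "(univ_Lp_improving K {1..n1} E1 \<and> nontrivial_estimate_at K {n1..n1 + n2 - 1} E2 n1)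
            \<or> (univ_Lp_improving K {n1..n1 + n2 - 1} E2 \<and> nontrivial_estimate_at K {1..n1} E1 n1)"
  shows "Lp_improving K {1..n1 + n2 - 1} (E1 \<union> E2)"
proof -
  have K: "(\<lambda>z. K (fst z) (snd z)) \<in> borel_measurable (borel \<Otimes>\<^sub>M borel)"
    using K_loc by (rule borel_measurable_locally_integrable_kernel)
  have g1: "graph {1..n1} E1" and g2: "graph {n1..n1 + n2 - 1} E2"
    using G1 G2 unfolding connected_graph_def by auto
  have common: "{1..n1} \<inter> {n1..n1 + n2 - 1} = {n1}" "{n1..n1 + n2 - 1} \<inter> {1..n1} = {n1}"
    and union: "{1..n1} \<union> {n1..n1 + n2 - 1} = {1..n1 + n2 - 1}"
    using n1 n2 by auto
  from hyp show ?thesis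
  proof
    assume "univ_Lp_improving K {1..n1} E1 \<and> nontrivial_estimate_at K {n1..n1 + n2 - 1} E2 n1"
    then show ?thesis
      using Lp_improving_glue[OF K g1 g2 common(1)] n1 n2
      unfolding univ_Lp_improving_def union by simp
  next
    assume "univ_Lp_improving K {n1..n1 + n2 - 1} E2 \<and> nontrivial_estimate_at K {1..n1} E1 n1"
    then show ?thesis
      using Lp_improving_glue[OF K g2 g1 common(2)] n1 n2
      unfolding univ_Lp_improving_def union Un_commute[of "{n1..n1 + n2 - 1}"]
        Un_commute[of E2] by simp
  qed
qed

end
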